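(* Let $G$ be a $3$-colorable well-bicovered graph in which every vertex lies in a triangle. Then in every proper $3$-coloring of $G$, each color class $V_i$ has size $b(G)/2$. Further, if every edge of $G$ lies in a triangle, then for each color class $V_i$ of a proper $3$-coloring, the subgraph $G-V_i$ is well-covered.
   Context: All graphs are finite and simple; "subgraph" means induced subgraph. $b(G)$ denotes the maximum order of an induced bipartite subgraph of $G$. A graph is well-bicovered if every vertex-inclusion-maximal induced bipartite subgraph has the same order. A graph is well-covered if every maximal independent set has the same cardinality. *)

theory Defs
  imports Main
begin

text \<open>A finite simple graph: finite vertex set V, symmetric irreflexive adjacency E
  whose edges lie within V.  Induced subgraphs are given by vertex subsets S of V.\<close>

definition simple_graph :: "'a set \<Rightarrow> ('a \<Rightarrow> 'a \<Rightarrow> bool) \<Rightarrow> bool" where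
  "simple_graph V E \<longleftrightarrow> finite V \<and> (\<forall>u v. E u v \<longrightarrow> E v u) \<and> (\<forall>v. \<not> E v v)
     \<and> (\<forall>u v. E u v \<longrightarrow> u \<in> V \<and> v \<in> V)"

definition independent :: "('a \<Rightarrow> 'a \<Rightarrow> bool) \<Rightarrow> 'a set \<Rightarrow> bool" where
  "independent E S \<longleftrightarrow> (\<forall>u\<in>S. \<forall>v\<in>S. \<not> E u v)"

definition bipartite_set :: "('a \<Rightarrow> 'a \<Rightarrow> bool) \<Rightarrow> 'a set \<Rightarrow> bool" where
  "bipartite_set E S \<longleftrightarrow> (\<exists>A B. A \<union> B = S \<and> A \<inter> B = {} \<and> independent E A \<and> independent E B)"

definition b :: "'a set \<Rightarrow> ('a \<Rightarrow> 'a \<Rightarrow> bool) \<Rightarrow> nat" where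
  "b V E = Max (card ` {S. S \<subseteq> V \<and> bipartite_set E S})"

definition maximal_bipartite_set :: "'a set \<Rightarrow> ('a \<Rightarrow> 'a \<Rightarrow> bool) \<Rightarrow> 'a set \<Rightarrow> bool" where
  "maximal_bipartite_set V E S \<longleftrightarrow> S \<subseteq> V \<and> bipartite_set E S \<and>
     (\<forall>T. S \<subset> T \<and> T \<subseteq> V \<longrightarrow> \<not> bipartite_set E T)"

definition well_bicovered :: "'a set \<Rightarrow> ('a \<Rightarrow> 'a \<Rightarrow> bool) \<Rightarrow> bool" where
  "well_bicovered V E \<longleftrightarrow> (\<forall>S T. maximal_bipartite_set V E S \<and> maximal_bipartite_set V E T
     \<longrightarrow> card S = card T)"

definition maximal_independent_set :: "'a set \<Rightarrow> ('a \<Rightarrow> 'a \<Rightarrow> bool) \<Rightarrow> 'a set \<Rightarrow> bool" where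
  "maximal_independent_set V E S \<longleftrightarrow> S \<subseteq> V \<and> independent E S \<and>
     (\<forall>T. S \<subset> T \<and> T \<subseteq> V \<longrightarrow> \<not> independent E T)"

definition well_covered :: "'a set \<Rightarrow> ('a \<Rightarrow> 'a \<Rightarrow> bool) \<Rightarrow> bool" where
  "well_covered V E \<longleftrightarrow> (\<forall>S T. maximal_independent_set V E S \<and> maximal_independent_set V E T
     \<longrightarrow> card S = card T)"

definition proper_coloring :: "'a set \<Rightarrow> ('a \<Rightarrow> 'a \<Rightarrow> bool) \<Rightarrow> nat \<Rightarrow> ('a \<Rightarrow> nat) \<Rightarrow> bool" where
  "proper_coloring V E k c \<longleftrightarrow> (\<forall>v\<in>V. c v < k) \<and> (\<forall>u\<in>V. \<forall>v\<in>V. E u v \<longrightarrow> c u \<noteq> c v)"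

definition colorable :: "'a set \<Rightarrow> ('a \<Rightarrow> 'a \<Rightarrow> bool) \<Rightarrow> nat \<Rightarrow> bool" where
  "colorable V E k \<longleftrightarrow> (\<exists>c. proper_coloring V E k c)"

definition color_class :: "'a set \<Rightarrow> ('a \<Rightarrow> nat) \<Rightarrow> nat \<Rightarrow> 'a set" where
  "color_class V c i = {v \<in> V. c v = i}"

definition vertex_in_triangle :: "'a set \<Rightarrow> ('a \<Rightarrow> 'a \<Rightarrow> bool) \<Rightarrow> 'a \<Rightarrow> bool" where
  "vertex_in_triangle V E v \<longleftrightarrow> (\<exists>u\<in>V. \<exists>w\<in>V. E v u \<and> E v w \<and> E u w)"

definition edge_in_triangle :: "'a set \<Rightarrow> ('a \<Rightarrow> 'a \<Rightarrow> bool) \<Rightarrow> 'a \<Rightarrow> 'a \<Rightarrow> bool" where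
  "edge_in_triangle V E u v \<longleftrightarrow> (\<exists>w\<in>V. E u w \<and> E v w)"

end

theory Submission
  imports Defs
begin

text \<open>Removing one colour class of a proper 3-colouring leaves two independent classes, hence an
  induced bipartite subgraph. If every vertex lies in a triangle, this subgraph is maximal: a
  vertex of the removed class closes a triangle with its two neighbours, which survive. In a
  well-bicovered graph it therefore has order b(G), so every class has size |V| - b(G), and since
  the three classes partition V, this size is b(G)/2. If moreover every edge lies in a triangle,
  then for each maximal independent set I of G - V_i the set I \<union> V_i is a maximal bipartite
  set: a vertex v outside it has a neighbour u in I, and the third vertex of a triangle on uv has
  colour i. Hence |I| = b(G) - |V_i| for all such I.\<close>

lemma triangle_not_bipartite_set:
  assumes "E x y" "E y z" "E x z" "x \<in> S" "y \<in> S" "z \<in> S"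
  shows "\<not> bipartite_set E S"
  using assms unfolding bipartite_set_def independent_def by blast

lemma simple_graph_finite: "simple_graph V E \<Longrightarrow> finite V"
  unfolding simple_graph_def by blast

lemma proper_coloring_less: "proper_coloring V E k c \<Longrightarrow> v \<in> V \<Longrightarrow> c v < k"
  unfolding proper_coloring_def by blast

lemma proper_coloring_adjacent:
  "proper_coloring V E k c \<Longrightarrow> E u v \<Longrightarrow> u \<in> V \<Longrightarrow> v \<in> V \<Longrightarrow> c u \<noteq> c v"
  unfolding proper_coloring_def by blast

lemma color_class_subset: "color_class V c i \<subseteq> V"
  unfolding color_class_def by blast

lemma independent_color_class:
  assumes "proper_coloring V E k c"
  shows "independent E (color_class V c i)"
  using proper_coloring_adjacent[OF assms] unfolding independent_def color_class_def by fastforce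

lemma finite_color_class: "finite V \<Longrightarrow> finite (color_class V c i)"
  unfolding color_class_def by auto

lemma card_eq_sum_card_color_class:
  assumes "finite V" "proper_coloring V E k c"
  shows "card V = (\<Sum>i<k. card (color_class V c i))"
proof -
  have "V = (\<Union>i<k. color_class V c i)"
    using assms(2) unfolding proper_coloring_def color_class_def by auto
  then have "card V = card (\<Union>i<k. color_class V c i)" by simp
  also have "\<dots> = (\<Sum>i<k. card (color_class V c i))"
    using assms(1) by (intro card_UN_disjoint) (auto simp: finite_color_class color_class_def)
  finally show ?thesis .
qed

lemma maximal_bipartite_set_card_b:
  assumes "simple_graph V E"
  shows "\<exists>S. maximal_bipartite_set V E S \<and> card S = b V E"
proof -
  have fin: "finite V" using assms by (rule simple_graph_finite)
  let ?F = "{S. S \<subseteq> V \<and> bipartite_set E S}"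
  have "finite ?F" using fin by (simp add: finite_subset[of _ "Pow V"] subset_eq)
  moreover have "{} \<in> ?F" unfolding bipartite_set_def independent_def by auto
  ultimately have "b V E \<in> card ` ?F" unfolding b_def by (intro Max_in) auto
  then obtain S where S: "S \<subseteq> V" "bipartite_set E S" "card S = b V E" by auto
  have "\<not> bipartite_set E T" if "S \<subset> T" "T \<subseteq> V" for T
  proof
    assume "bipartite_set E T"
    then have "card T \<le> b V E"
      unfolding b_def using that \<open>finite ?F\<close> by (intro Max_ge) auto
    moreover have "card S < card T"
      using that fin by (meson finite_subset psubset_card_mono)
    ultimately show False using S by simp
  qed
  then show ?thesis using S unfolding maximal_bipartite_set_def by auto
qed

lemma well_bicovered_card_maximal_bipartite_set:
  assumes "simple_graph V E" "well_bicovered V E" "maximal_bipartite_set V E S"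
  shows "card S = b V E"
  using maximal_bipartite_set_card_b[OF assms(1)] assms(2,3) unfolding well_bicovered_def by metis

lemma bipartite_set_Diff_color_class:
  assumes pc: "proper_coloring V E 3 c" and l: "l < 3"
  shows "bipartite_set E (V - color_class V c l)"
proof -
  obtain j :: nat where j: "j < 3" "j \<noteq> l"
    using that[of "if l = 0 then 1 else 0"] by auto
  let ?third = "{v \<in> V. c v \<noteq> j \<and> c v \<noteq> l}"
  have "independent E ?third"
    unfolding independent_def
  proof (intro ballI notI)
    fix u v assume u: "u \<in> ?third" and v: "v \<in> ?third" and "E u v"
    then have "c u \<noteq> c v" using proper_coloring_adjacent[OF pc] by blast
    moreover have "c u < 3" "c v < 3" using u v proper_coloring_less[OF pc] by auto
    ultimately show False using u v j l by simp
  qed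
  moreover have "V - color_class V c l = color_class V c j \<union> ?third"
    and "color_class V c j \<inter> ?third = {}"
    using j unfolding color_class_def by auto
  ultimately show ?thesis
    unfolding bipartite_set_def using independent_color_class[OF pc, of j] by auto
qed

lemma maximal_bipartite_set_Diff_color_class:
  assumes pc: "proper_coloring V E 3 c" and l: "l < 3"
    and triangles: "\<forall>v\<in>V. vertex_in_triangle V E v"
  shows "maximal_bipartite_set V E (V - color_class V c l)"
proof -
  have "\<not> bipartite_set E T" if T: "V - color_class V c l \<subset> T" "T \<subseteq> V" for T
  proof -
    obtain v where v: "v \<in> T" "v \<in> V" "c v = l" using T unfolding color_class_def by auto
    obtain u w where uw: "u \<in> V" "w \<in> V" "E v u" "E v w" "E u w"
      using triangles v unfolding vertex_in_triangle_def color_class_def by auto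
    have "c u \<noteq> l" "c w \<noteq> l"
      using proper_coloring_adjacent[OF pc uw(3) v(2) uw(1)]
        proper_coloring_adjacent[OF pc uw(4) v(2) uw(2)] v(3) by auto
    then have "u \<in> T" "w \<in> T"
      using uw T unfolding color_class_def by auto
    then show ?thesis using triangle_not_bipartite_set[OF uw(3,5,4)] v by auto
  qed
  then show ?thesis
    using bipartite_set_Diff_color_class[OF pc l] unfolding maximal_bipartite_set_def by auto
qed

lemma maximal_bipartite_set_maximal_independent_Un_color_class:
  assumes sg: "simple_graph V E" and pc: "proper_coloring V E 3 c" and l: "l < 3"
    and triangles: "\<forall>u\<in>V. \<forall>v\<in>V. E u v \<longrightarrow> edge_in_triangle V E u v"
    and I: "maximal_independent_set (V - color_class V c l) E I"
  shows "maximal_bipartite_set V E (I \<union> color_class V c l)"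
proof -
  have IV: "I \<subseteq> V - color_class V c l" and Ii: "independent E I"
    using I unfolding maximal_independent_set_def by auto
  have bip: "bipartite_set E (I \<union> color_class V c l)"
    unfolding bipartite_set_def using IV Ii independent_color_class[OF pc] by blast
  have "\<not> bipartite_set E T" if T: "I \<union> color_class V c l \<subset> T" "T \<subseteq> V" for T
  proof -
    obtain v where v: "v \<in> T" "v \<notin> I" "v \<in> V - color_class V c l" using T by auto
    then have "\<not> independent E (insert v I)"
      using I IV unfolding maximal_independent_set_def by blast
    then obtain u where u: "u \<in> I" "E u v"
      using Ii sg unfolding independent_def simple_graph_def by blast
    then obtain w where w: "w \<in> V" "E u w" "E v w"
      using triangles IV v unfolding edge_in_triangle_def by blast
    have uV: "u \<in> V" "c u \<noteq> l" using u IV unfolding color_class_def by auto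
    have "c u \<noteq> c v" "c u \<noteq> c w" "c v \<noteq> c w"
      using proper_coloring_adjacent[OF pc u(2) uV(1)] proper_coloring_adjacent[OF pc w(2) uV(1)]
        proper_coloring_adjacent[OF pc w(3)] v w(1) by auto
    moreover have "c u < 3" "c v < 3" "c w < 3"
      using proper_coloring_less[OF pc] uV v w by auto
    ultimately have "w \<in> color_class V c l"
      using l uV v w(1) unfolding color_class_def by auto
    then show ?thesis using triangle_not_bipartite_set[OF u(2) w(3) w(2)] u v T by auto
  qed
  then show ?thesis
    using bip IV color_class_subset[of V c l] unfolding maximal_bipartite_set_def by auto
qed

lemma card_color_class_add_b:
  assumes sg: "simple_graph V E" and "well_bicovered V E" "\<forall>v\<in>V. vertex_in_triangle V E v"
    and "proper_coloring V E 3 c" "l < 3"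
  shows "card V = card (color_class V c l) + b V E"
proof -
  have "card (V - color_class V c l) = b V E"
    using assms by (intro well_bicovered_card_maximal_bipartite_set
        maximal_bipartite_set_Diff_color_class)
  then show ?thesis
    using simple_graph_finite[OF sg] color_class_subset[of V c l]
    by (metis card_Diff_subset card_mono finite_subset le_add_diff_inverse)
qed

lemma double_card_color_class_eq_b:
  assumes sg: "simple_graph V E" and wb: "well_bicovered V E"
    and triangles: "\<forall>v\<in>V. vertex_in_triangle V E v"
    and pc: "proper_coloring V E 3 c" and "i < 3"
  shows "2 * card (color_class V c i) = b V E"
proof -
  have "card V = card (color_class V c 0) + card (color_class V c 1) + card (color_class V c 2)"
    using card_eq_sum_card_color_class[OF simple_graph_finite[OF sg] pc]
    by (simp add: eval_nat_numeral)
  moreover have "card V = card (color_class V c 0) + b V E" "card V = card (color_class V c 1) + b V E"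
    "card V = card (color_class V c 2) + b V E"
    using card_color_class_add_b[OF sg wb triangles pc] by simp_all
  moreover have "i = 0 \<or> i = 1 \<or> i = 2" using \<open>i < 3\<close> by auto
  ultimately show ?thesis by auto
qed

lemma well_covered_Diff_color_class:
  assumes sg: "simple_graph V E" and wb: "well_bicovered V E"
    and triangles: "\<forall>u\<in>V. \<forall>v\<in>V. E u v \<longrightarrow> edge_in_triangle V E u v"
    and pc: "proper_coloring V E 3 c" and l: "l < 3"
  shows "well_covered (V - color_class V c l) E"
proof -
  have "card I + card (color_class V c l) = b V E"
    if I: "maximal_independent_set (V - color_class V c l) E I" for I
  proof -
    have "I \<subseteq> V - color_class V c l" using I unfolding maximal_independent_set_def by blast
    moreover have "card (I \<union> color_class V c l) = b V E"
      using sg wb pc l triangles I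
      by (intro well_bicovered_card_maximal_bipartite_set
          maximal_bipartite_set_maximal_independent_Un_color_class)
    ultimately show ?thesis
      using simple_graph_finite[OF sg] finite_color_class
      by (metis Diff_disjoint card_Un_disjoint disjoint_iff finite_subset Diff_subset subsetD)
  qed
  then show ?thesis unfolding well_covered_def by (metis add_right_cancel)
qed

theorem mainTheorem15:
  fixes V :: "'a set" and E :: "'a \<Rightarrow> 'a \<Rightarrow> bool"
  assumes "simple_graph V E"
    and "colorable V E 3"
    and "well_bicovered V E"
    and "\<forall>v\<in>V. vertex_in_triangle V E v"
  shows "(\<forall>c i. proper_coloring V E 3 c \<and> i < 3 \<longrightarrow> 2 * card (color_class V c i) = b V E)
     \<and> ((\<forall>u\<in>V. \<forall>v\<in>V. E u v \<longrightarrow> edge_in_triangle V E u v) \<longrightarrow>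
         (\<forall>c i. proper_coloring V E 3 c \<and> i < 3 \<longrightarrow> well_covered (V - color_class V c i) E))"
  using double_card_color_class_eq_b[OF assms(1,3,4)] well_covered_Diff_color_class[OF assms(1,3)]
  by blast

end
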